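(* For every profile $P$: $|\mathit{TC}(P)|=1$ if and only if all agents have pairwise distinct top choices. Analogously, $|\mathit{BC}(P)|=1$ if and only if all agents have pairwise distinct bottom choices.
   Context: Let $N=\{1,\dots,n\}$ be agents and $H$ a set of $n$ houses. A profile $P=(\succ_1,\dots,\succ_n)$ gives each agent a strict linear order on $H$; an agent's top (bottom) choice is the house she ranks first (last). An assignment is a bijection $N\to H$; $M$ is the set of assignments. Agent $x$ weakly prefers $\mu$ to $\lambda$ if $\mu(x)\succ_x\lambda(x)$ or $\mu(x)=\lambda(x)$. $N_{\mu,\lambda}$ is the set of agents weakly preferring $\mu$ to $\lambda$; $\mu\succsim\lambda$ if $|N_{\mu,\lambda}|\ge|N_{\lambda,\mu}|$, and $\succsim^*$ is its transitive closure. $\mathit{TC}(P)=\{\mu\in M:\mu\succsim^*\lambda\ \forall\lambda\in M\}$, $\mathit{BC}(P)=\{\mu\in M:\lambda\succsim^*\mu\ \forall\lambda\in M\}$. *)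

theory Defs
  imports Main
begin

text \<open>A profile P gives each agent x a strict linear order P x on H,
  encoded as a relation: (h, h') \<in> P x means h \<succ>_x h'.\<close>

definition is_profile :: "'a set \<Rightarrow> 'h set \<Rightarrow> ('a \<Rightarrow> ('h \<times> 'h) set) \<Rightarrow> bool" where
  "is_profile N H P \<longleftrightarrow> (\<forall>x\<in>N. strict_linear_order_on H (P x) \<and> P x \<subseteq> H \<times> H)"

definition top_choice :: "'h set \<Rightarrow> ('h \<times> 'h) set \<Rightarrow> 'h" where
  "top_choice H r = (THE h. h \<in> H \<and> (\<forall>h'\<in>H. h' \<noteq> h \<longrightarrow> (h, h') \<in> r))"

definition bottom_choice :: "'h set \<Rightarrow> ('h \<times> 'h) set \<Rightarrow> 'h" where
  "bottom_choice H r = (THE h. h \<in> H \<and> (\<forall>h'\<in>H. h' \<noteq> h \<longrightarrow> (h', h) \<in> r))"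

text \<open>Assignments: bijections N \<rightarrow> H (extensional: undefined outside N, so that
  M is a finite set of functions).\<close>
definition assignments :: "'a set \<Rightarrow> 'h set \<Rightarrow> ('a \<Rightarrow> 'h) set" where
  "assignments N H = {\<mu>. bij_betw \<mu> N H \<and> (\<forall>x. x \<notin> N \<longrightarrow> \<mu> x = undefined)}"

definition weak_pref_agents ::
  "'a set \<Rightarrow> ('a \<Rightarrow> ('h \<times> 'h) set) \<Rightarrow> ('a \<Rightarrow> 'h) \<Rightarrow> ('a \<Rightarrow> 'h) \<Rightarrow> 'a set" where
  "weak_pref_agents N P \<mu> \<nu> = {x\<in>N. (\<mu> x, \<nu> x) \<in> P x \<or> \<mu> x = \<nu> x}"

definition maj_rel :: "'a set \<Rightarrow> 'h set \<Rightarrow> ('a \<Rightarrow> ('h \<times> 'h) set) \<Rightarrow> (('a \<Rightarrow> 'h) \<times> ('a \<Rightarrow> 'h)) set" where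
  "maj_rel N H P = {(\<mu>, \<nu>). \<mu> \<in> assignments N H \<and> \<nu> \<in> assignments N H \<and>
      card (weak_pref_agents N P \<mu> \<nu>) \<ge> card (weak_pref_agents N P \<nu> \<mu>)}"

definition TC :: "'a set \<Rightarrow> 'h set \<Rightarrow> ('a \<Rightarrow> ('h \<times> 'h) set) \<Rightarrow> ('a \<Rightarrow> 'h) set" where
  "TC N H P = {\<mu> \<in> assignments N H. \<forall>\<nu>\<in>assignments N H. (\<mu>, \<nu>) \<in> (maj_rel N H P)\<^sup>+}"

definition BC :: "'a set \<Rightarrow> 'h set \<Rightarrow> ('a \<Rightarrow> ('h \<times> 'h) set) \<Rightarrow> ('a \<Rightarrow> 'h) set" where
  "BC N H P = {\<mu> \<in> assignments N H. \<forall>\<nu>\<in>assignments N H. (\<nu>, \<mu>) \<in> (maj_rel N H P)\<^sup>+}"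

end

theory Submission
  imports Defs "HOL-Combinatorics.Transposition" "HOL-Library.FuncSet"
begin

text \<open>If the top choices are distinct, the assignment giving every agent her top choice is
  weakly preferred by everybody to any other assignment, while against any other assignment
  some agent strictly prefers it. Hence it majority-beats everything and nothing else even
  ties with it, so it is the only member of the top cycle. Conversely, let the top cycle be
  \<open>{\<mu>}\<close> and let agent \<open>x\<close> miss her top choice, held by \<open>y\<close>. Swapping the houses of \<open>x\<close> and
  \<open>y\<close> gives \<open>\<nu>\<close>, which all agents but \<open>y\<close> weakly prefer and which \<open>x\<close> strictly prefers;
  so \<open>\<nu> \<succsim> \<mu>\<close>, hence \<open>\<nu>\<close> lies in the top cycle as well, contradicting uniqueness.
  Bottom cycles are the top cycles of the reversed profile.\<close>

lemma strict_linear_order_on_asym: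
  "strict_linear_order_on H r \<Longrightarrow> (a, b) \<in> r \<Longrightarrow> (b, a) \<notin> r"
  unfolding strict_linear_order_on_def trans_def irrefl_def by blast

lemma strict_linear_order_on_ex1_top:
  assumes "finite H" "H \<noteq> {}" "strict_linear_order_on H r"
  shows "\<exists>!h. h \<in> H \<and> (\<forall>h'\<in>H. h' \<noteq> h \<longrightarrow> (h, h') \<in> r)"
proof -
  have trans: "trans r" and irrefl: "irrefl r" and total: "total_on H r"
    using assms(3) unfolding strict_linear_order_on_def by auto
  let ?rH = "r \<inter> H \<times> H"
  have "acyclic r"
    using irrefl unfolding acyclic_irrefl trancl_id[OF trans] .
  then have "acyclic ?rH"
    by (rule acyclic_subset) blast
  then have "wf ?rH"
    using assms(1) by (intro finite_acyclic_wf) (simp_all add: finite_subset)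
  then obtain h where h: "h \<in> H" and maximal: "\<And>h'. (h', h) \<in> ?rH \<Longrightarrow> h' \<notin> H"
    using assms(2) by (rule wfE_min') blast
  have top: "(h, h') \<in> r" if "h' \<in> H" "h' \<noteq> h" for h'
  proof -
    have "(h, h') \<in> r \<or> (h', h) \<in> r"
      using total that h unfolding total_on_def by blast
    moreover have "(h', h) \<notin> r"
      using maximal[of h'] that h by blast
    ultimately show ?thesis
      by blast
  qed
  show ?thesis
  proof (rule ex1I[of _ h])
    show "h \<in> H \<and> (\<forall>h'\<in>H. h' \<noteq> h \<longrightarrow> (h, h') \<in> r)"
      using h top by blast
  next
    fix g assume g: "g \<in> H \<and> (\<forall>h'\<in>H. h' \<noteq> g \<longrightarrow> (g, h') \<in> r)"
    show "g = h"
    proof (rule ccontr)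
      assume "g \<noteq> h"
      then have "(g, h) \<in> r" and "(h, g) \<in> r"
        using g h top by auto
      then show False
        using strict_linear_order_on_asym[OF assms(3)] by blast
    qed
  qed
qed

lemma
  assumes "finite H" "H \<noteq> {}" "strict_linear_order_on H r"
  shows top_choice_in: "top_choice H r \<in> H"
    and top_choice_preferred: "h \<in> H \<Longrightarrow> h \<noteq> top_choice H r \<Longrightarrow> (top_choice H r, h) \<in> r"
  using theI'[OF strict_linear_order_on_ex1_top[OF assms]] unfolding top_choice_def by auto

lemma top_choice_converse: "top_choice H (r\<inverse>) = bottom_choice H r"
  unfolding top_choice_def bottom_choice_def by simp

lemma is_profile_strict_linear_order_on:
  "is_profile N H P \<Longrightarrow> x \<in> N \<Longrightarrow> strict_linear_order_on H (P x)"
  unfolding is_profile_def by blast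

lemma is_profile_top_choice_preferred:
  assumes "is_profile N H P" "finite H" "x \<in> N" "h \<in> H" "h \<noteq> top_choice H (P x)"
  shows "(top_choice H (P x), h) \<in> P x"
proof -
  have "H \<noteq> {}"
    using assms(4) by blast
  then show ?thesis
    using assms(4,5)
    by (rule top_choice_preferred[OF assms(2) _ is_profile_strict_linear_order_on[OF assms(1,3)]])
qed

lemma is_profile_converse: "is_profile N H P \<Longrightarrow> is_profile N H (\<lambda>x. (P x)\<inverse>)"
  unfolding is_profile_def strict_linear_order_on_def
  by (auto simp: trans_def irrefl_def total_on_def)

lemma assignments_eq_extensional: "assignments N H = {\<mu> \<in> extensional N. bij_betw \<mu> N H}"
  unfolding assignments_def extensional_def by blast

lemma assignment_image: "\<mu> \<in> assignments N H \<Longrightarrow> \<mu> ` N = H"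
  unfolding assignments_def bij_betw_def by blast

lemma assignment_in: "\<mu> \<in> assignments N H \<Longrightarrow> x \<in> N \<Longrightarrow> \<mu> x \<in> H"
  using assignment_image by blast

lemma assignments_eqI:
  "\<mu> \<in> assignments N H \<Longrightarrow> \<nu> \<in> assignments N H \<Longrightarrow> (\<And>x. x \<in> N \<Longrightarrow> \<mu> x = \<nu> x) \<Longrightarrow> \<mu> = \<nu>"
  unfolding assignments_eq_extensional by (blast intro: extensionalityI)

lemma comp_transpose_in_assignments:
  assumes "\<mu> \<in> assignments N H" "x \<in> N" "y \<in> N"
  shows "\<mu> \<circ> transpose x y \<in> assignments N H"
proof -
  have "bij_betw (\<mu> \<circ> transpose x y) N H"
    using assms bij_betw_trans[of "transpose x y" N N \<mu> H]
    unfolding assignments_def by simp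
  moreover have "\<mu> \<circ> transpose x y \<in> extensional N"
    using assms unfolding assignments_eq_extensional extensional_def transpose_def by auto
  ultimately show ?thesis
    unfolding assignments_eq_extensional by blast
qed

lemma restrict_in_assignments:
  assumes "finite H" "card N = card H" "inj_on f N" "f ` N \<subseteq> H"
  shows "restrict f N \<in> assignments N H"
proof -
  have "f ` N = H"
    using assms by (simp add: card_image card_subset_eq)
  then show ?thesis
    using assms(3) unfolding assignments_eq_extensional bij_betw_def by simp
qed

lemma weak_pref_agents_subset: "weak_pref_agents N P \<mu> \<nu> \<subseteq> N"
  unfolding weak_pref_agents_def by blast

lemma TC_closed_under_maj_rel_predecessors:
  "\<mu> \<in> TC N H P \<Longrightarrow> (\<nu>, \<mu>) \<in> maj_rel N H P \<Longrightarrow> \<nu> \<in> TC N H P"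
  unfolding TC_def maj_rel_def by (auto intro: trancl_into_trancl2)

lemma trancl_predecessor_fixed:
  assumes "\<And>y. (y, m) \<in> R \<Longrightarrow> y = m" and "(x, m) \<in> R\<^sup>+"
  shows "x = m"
  using assms(2) by (induction rule: converse_trancl_induct) (auto dest: assms(1))

lemma TC_eq_singletonI:
  assumes "\<mu> \<in> assignments N H" "\<And>\<nu>. \<nu> \<in> assignments N H \<Longrightarrow> (\<mu>, \<nu>) \<in> maj_rel N H P"
    and "\<And>\<nu>. (\<nu>, \<mu>) \<in> maj_rel N H P \<Longrightarrow> \<nu> = \<mu>"
  shows "TC N H P = {\<mu>}"
  using assms trancl_predecessor_fixed[where R = "maj_rel N H P" and m = \<mu>] unfolding TC_def by blast

lemma top_assignment_weakly_preferred:
  assumes "is_profile N H P" "finite H" "\<nu> \<in> assignments N H"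
    and tops: "\<And>x. x \<in> N \<Longrightarrow> \<mu> x = top_choice H (P x)"
  shows "weak_pref_agents N P \<mu> \<nu> = N"
proof -
  have "(\<mu> x, \<nu> x) \<in> P x \<or> \<mu> x = \<nu> x" if "x \<in> N" for x
    using is_profile_top_choice_preferred[OF assms(1,2) that assignment_in[OF assms(3) that]]
      tops[OF that] by metis
  then show ?thesis
    unfolding weak_pref_agents_def by blast
qed

lemma maj_rel_into_top_assignment:
  assumes "is_profile N H P" "finite N" "finite H" "\<mu> \<in> assignments N H"
    and tops: "\<And>x. x \<in> N \<Longrightarrow> \<mu> x = top_choice H (P x)"
    and "(\<nu>, \<mu>) \<in> maj_rel N H P"
  shows "\<nu> = \<mu>"
proof (rule ccontr)
  assume "\<nu> \<noteq> \<mu>"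
  have \<nu>: "\<nu> \<in> assignments N H"
    using assms(6) by (simp add: maj_rel_def)
  then obtain x where x: "x \<in> N" "\<nu> x \<noteq> \<mu> x"
    using assignments_eqI[OF _ assms(4)] \<open>\<nu> \<noteq> \<mu>\<close> by blast
  have "(top_choice H (P x), \<nu> x) \<in> P x"
    using x(2) tops[OF x(1)]
    by (intro is_profile_top_choice_preferred[OF assms(1,3) x(1) assignment_in[OF \<nu> x(1)]]) simp
  then have "(\<nu> x, \<mu> x) \<notin> P x"
    using strict_linear_order_on_asym[OF is_profile_strict_linear_order_on[OF assms(1) x(1)]]
      tops[OF x(1)] by simp
  then have "x \<notin> weak_pref_agents N P \<nu> \<mu>"
    using x(2) by (simp add: weak_pref_agents_def)
  then have "weak_pref_agents N P \<nu> \<mu> \<subset> N"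
    using weak_pref_agents_subset[of N P \<nu> \<mu>] x(1) by blast
  then have "card (weak_pref_agents N P \<nu> \<mu>) < card N"
    by (rule psubset_card_mono[OF assms(2)])
  also have "\<dots> = card (weak_pref_agents N P \<mu> \<nu>)"
    using top_assignment_weakly_preferred[OF assms(1,3) \<nu> tops] by simp
  finally show False
    using assms(6) by (simp add: maj_rel_def)
qed

lemma TC_top_assignment:
  assumes "is_profile N H P" "finite N" "finite H" "\<mu> \<in> assignments N H"
    and tops: "\<And>x. x \<in> N \<Longrightarrow> \<mu> x = top_choice H (P x)"
  shows "TC N H P = {\<mu>}"
proof (rule TC_eq_singletonI[OF assms(4)])
  fix \<nu> assume \<nu>: "\<nu> \<in> assignments N H"
  have "weak_pref_agents N P \<mu> \<nu> = N"
    by (rule top_assignment_weakly_preferred[OF assms(1,3) \<nu> tops])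
  then have "card (weak_pref_agents N P \<nu> \<mu>) \<le> card (weak_pref_agents N P \<mu> \<nu>)"
    using card_mono[OF assms(2) weak_pref_agents_subset] by simp
  with \<nu> assms(4) show "(\<mu>, \<nu>) \<in> maj_rel N H P"
    unfolding maj_rel_def by simp
qed (rule maj_rel_into_top_assignment[OF assms])

lemma maj_rel_swap_top_choice:
  assumes "is_profile N H P" "finite N" "finite H" "\<mu> \<in> assignments N H"
    and x: "x \<in> N" "\<mu> x \<noteq> top_choice H (P x)"
    and y: "y \<in> N" "\<mu> y = top_choice H (P x)"
  shows "(\<mu> \<circ> transpose x y, \<mu>) \<in> maj_rel N H P"
proof -
  define \<nu> where "\<nu> = \<mu> \<circ> transpose x y"
  have \<nu>x: "\<nu> x = top_choice H (P x)"
    unfolding \<nu>_def using y(2) by simp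
  have others: "\<nu> z = \<mu> z" if "z \<noteq> x" "z \<noteq> y" for z
    unfolding \<nu>_def using that by simp
  have x_prefers: "(\<nu> x, \<mu> x) \<in> P x"
    unfolding \<nu>x using assignment_in[OF assms(4) x(1)] x(2)
    by (rule is_profile_top_choice_preferred[OF assms(1,3) x(1)])
  have "z \<in> weak_pref_agents N P \<nu> \<mu>" if "z \<in> N - {y}" for z
    using that x_prefers others[of z] by (cases "z = x") (auto simp: weak_pref_agents_def)
  then have "N - {y} \<subseteq> weak_pref_agents N P \<nu> \<mu>"
    by blast
  have "(\<mu> x, \<nu> x) \<notin> P x"
    using strict_linear_order_on_asym[OF is_profile_strict_linear_order_on[OF assms(1) x(1)] x_prefers] .
  then have "x \<notin> weak_pref_agents N P \<mu> \<nu>"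
    using x(2) \<nu>x by (simp add: weak_pref_agents_def)
  then have "weak_pref_agents N P \<mu> \<nu> \<subseteq> N - {x}"
    using weak_pref_agents_subset[of N P \<mu> \<nu>] by blast
  then have "card (weak_pref_agents N P \<mu> \<nu>) \<le> card (N - {x})"
    using assms(2) by (simp add: card_mono)
  also have "\<dots> = card (N - {y})"
    using x(1) y(1) assms(2) by simp
  also have "\<dots> \<le> card (weak_pref_agents N P \<nu> \<mu>)"
    using card_mono[OF finite_subset[OF weak_pref_agents_subset assms(2)]] \<open>N - {y} \<subseteq> _\<close> .
  finally have "card (weak_pref_agents N P \<mu> \<nu>) \<le> card (weak_pref_agents N P \<nu> \<mu>)" .
  moreover have "\<nu> \<in> assignments N H"
    unfolding \<nu>_def using assms(4) x(1) y(1) by (rule comp_transpose_in_assignments)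
  ultimately have "(\<nu>, \<mu>) \<in> maj_rel N H P"
    using assms(4) by (simp add: maj_rel_def)
  then show ?thesis
    unfolding \<nu>_def .
qed

lemma TC_singleton_top_choice:
  assumes "is_profile N H P" "finite N" "finite H" "TC N H P = {\<mu>}" "x \<in> N"
  shows "\<mu> x = top_choice H (P x)"
proof (rule ccontr)
  assume miss: "\<mu> x \<noteq> top_choice H (P x)"
  have \<mu>: "\<mu> \<in> assignments N H"
    using assms(4) unfolding TC_def by blast
  have "H \<noteq> {}"
    using assignment_in[OF \<mu> assms(5)] by blast
  then have "top_choice H (P x) \<in> \<mu> ` N"
    unfolding assignment_image[OF \<mu>]
    by (rule top_choice_in[OF assms(3) _ is_profile_strict_linear_order_on[OF assms(1,5)]])
  then obtain y where y: "y \<in> N" "\<mu> y = top_choice H (P x)"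
    by (rule imageE) simp
  have "\<mu> \<circ> transpose x y \<in> TC N H P"
    using TC_closed_under_maj_rel_predecessors
      maj_rel_swap_top_choice[OF assms(1-3) \<mu> assms(5) miss y] assms(4) by blast
  then have "\<mu> \<circ> transpose x y = \<mu>"
    using assms(4) by blast
  then show False
    using miss y(2) swap_apply(1)[of \<mu> x y] by simp
qed

theorem card_TC_eq_1_iff:
  assumes "finite N" "finite H" "card N = card H" "is_profile N H P"
  shows "card (TC N H P) = 1 \<longleftrightarrow> inj_on (\<lambda>x. top_choice H (P x)) N"
proof
  assume "card (TC N H P) = 1"
  then obtain \<mu> where TC: "TC N H P = {\<mu>}"
    by (rule card_1_singletonE)
  then have "inj_on \<mu> N"
    unfolding TC_def assignments_def bij_betw_def by blast
  moreover have "inj_on \<mu> N = inj_on (\<lambda>x. top_choice H (P x)) N"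
    using TC_singleton_top_choice[OF assms(4,1,2) TC] by (rule inj_on_cong)
  ultimately show "inj_on (\<lambda>x. top_choice H (P x)) N"
    by simp
next
  let ?t = "\<lambda>x. top_choice H (P x)"
  assume "inj_on ?t N"
  moreover have "?t x \<in> H" if "x \<in> N" for x
  proof -
    have "H \<noteq> {}"
      using that assms(1,3) by auto
    then show ?thesis
      by (rule top_choice_in[OF assms(2) _ is_profile_strict_linear_order_on[OF assms(4) that]])
  qed
  ultimately have "restrict ?t N \<in> assignments N H"
    by (intro restrict_in_assignments[OF assms(2,3)]) auto
  then have "TC N H P = {restrict ?t N}"
    by (rule TC_top_assignment[OF assms(4,1,2)]) simp
  then show "card (TC N H P) = 1"
    by simp
qed

lemma BC_eq_TC_converse: "BC N H P = TC N H (\<lambda>x. (P x)\<inverse>)"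
proof -
  have "weak_pref_agents N (\<lambda>x. (P x)\<inverse>) \<mu> \<nu> = weak_pref_agents N P \<nu> \<mu>" for \<mu> \<nu>
    unfolding weak_pref_agents_def by auto
  then have converse: "maj_rel N H (\<lambda>x. (P x)\<inverse>) = (maj_rel N H P)\<inverse>"
    unfolding maj_rel_def by auto
  show ?thesis
    unfolding BC_def TC_def converse trancl_converse by auto
qed

theorem lemmaB2:
  fixes N :: "'a set" and H :: "'h set" and P :: "'a \<Rightarrow> ('h \<times> 'h) set"
  assumes "finite N" and "finite H" and "card N = card H"
    and "is_profile N H P"
  shows "(card (TC N H P) = 1 \<longleftrightarrow> inj_on (\<lambda>x. top_choice H (P x)) N)
       \<and> (card (BC N H P) = 1 \<longleftrightarrow> inj_on (\<lambda>x. bottom_choice H (P x)) N)"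
  using card_TC_eq_1_iff[OF assms]
    card_TC_eq_1_iff[OF assms(1-3) is_profile_converse[OF assms(4)]]
  unfolding BC_eq_TC_converse top_choice_converse by blast

end
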